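(* Let $A_0\subseteq V'$ be feasible for (GDSP) with $\mathrm{assoc}_S(A_0)>0$. Let $$\theta=\min\{\mathrm{pen}(A):\emptyset\neq A\subseteq V',\ A \text{ infeasible for (GDSP)}\}$$ (if no infeasible nonempty set exists, the condition on $\gamma$ below is void). Let $$\gamma>\frac{\mathrm{vol}_d(V)}{\theta}\cdot\frac{\mathrm{vol}_g(A_0)+\nu_S}{\mathrm{assoc}_S(A_0)}.$$ Consider the unconstrained problem $$\min_{\emptyset\neq A\subseteq V'} U(A),\qquad U(A):=\frac{\mathrm{vol}_g(A)+\nu_S\,\mathrm{unit}(A)+\gamma\,\mathrm{pen}(A)}{\mathrm{assoc}_S(A)},$$ with the convention $x/0=+\infty$ for $x>0$. Then: - Every minimizer of $U$ is feasible for (GDSP) and is an optimal solution of (GDSP). - Every optimal solution of (GDSP) is a minimizer of $U$. - The minimum value of $U$ equals the reciprocal of the optimal value of (GDSP).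
   Context: Let $V$ be a finite vertex set with symmetric nonnegative weights $w_{ij}=w_{ji}\ge0$ and $w_{ii}=0$. - $d_i=\sum_{j\in V}w_{ij}$, and $\mathrm{vol}_h(A)=\sum_{i\in A}h_i$ for $h:V\to\mathbb{R}$. - $\mathrm{assoc}(A)=\sum_{i,j\in A}w_{ij}$ (ordered pairs), and $\mathrm{cut}(A,B)=\sum_{i\in A,j\in B}w_{ij}$. - Fix $S\subseteq V$, $V'=V\setminus S$, and $d^S_i=\sum_{j\in S}w_{ij}$. - $g:V\to(0,\infty)$, $\mu_S=\mathrm{assoc}(S)$, $\nu_S=\mathrm{vol}_g(S)$. - $\mathrm{unit}(A)=1$ if $A\ne\emptyset$ and $0$ otherwise. - For $A\subseteq V'$: $\mathrm{assoc}_S(A)=\mathrm{vol}_d(A)-\mathrm{cut}(A,V'\setminus A)+\mathrm{vol}_{d^S}(A)+\mu_S\,\mathrm{unit}(A)$. Constraint data: - Vectors $M_1,\dots,M_p\in[0,\infty)^V$ and reals $k_j,l_j$ for $j=1,\dots,p$. - A symmetric function $\mathrm{dist}:V\times V\to[0,\infty)$ with $\mathrm{dist}(u,u)=0$, and a threshold $d_0\ge0$. - A set $A\subseteq V'$ is feasible for (GDSP) if $A\neq\emptyset$, $k_j\le \mathrm{vol}_{M_j}(A)\le l_j$ for all $j$, and $\mathrm{dist}(u,v)\le d_0$ for all $u,v\in A$. - (GDSP) is the problem of maximizing $\dfrac{\mathrm{assoc}_S(A)}{\mathrm{vol}_g(A)+\nu_S}$ over feasible $A$. Penalty: $\mathrm{pen}(\emptyset)=0$,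 and for $A\ne\emptyset$, $$\mathrm{pen}(A)=\sum_{j=1}^p\max\{0,\mathrm{vol}_{M_j}(A)-l_j\}+\sum_{j=1}^p\max\{0,k_j-\mathrm{vol}_{M_j}(A)\}+\sum_{u,v\in A}\max\{0,\mathrm{dist}(u,v)-d_0\}.$$ *)

theory Defs
  imports Complex_Main "HOL-Library.Extended_Real"
begin

definition vol :: "('v \<Rightarrow> real) \<Rightarrow> 'v set \<Rightarrow> real" where
  "vol h A = (\<Sum>i\<in>A. h i)"

definition deg :: "('v \<Rightarrow> 'v \<Rightarrow> real) \<Rightarrow> 'v set \<Rightarrow> 'v \<Rightarrow> real" where
  "deg w T i = (\<Sum>j\<in>T. w i j)"

definition assoc :: "('v \<Rightarrow> 'v \<Rightarrow> real) \<Rightarrow> 'v set \<Rightarrow> real" where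
  "assoc w A = (\<Sum>i\<in>A. \<Sum>j\<in>A. w i j)"

definition cut :: "('v \<Rightarrow> 'v \<Rightarrow> real) \<Rightarrow> 'v set \<Rightarrow> 'v set \<Rightarrow> real" where
  "cut w A B = (\<Sum>i\<in>A. \<Sum>j\<in>B. w i j)"

definition unit_set :: "'v set \<Rightarrow> real" where
  "unit_set A = (if A \<noteq> {} then 1 else 0)"

text \<open>assoc_S(A) for A a subset of V' = V - S; here d = deg w V and d^S = deg w S.\<close>
definition assocS :: "('v \<Rightarrow> 'v \<Rightarrow> real) \<Rightarrow> 'v set \<Rightarrow> 'v set \<Rightarrow> 'v set \<Rightarrow> real" where
  "assocS w V S A = vol (deg w V) A - cut w A ((V - S) - A) + vol (deg w S) A
      + assoc w S * unit_set A"

definition feasible ::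
  "'v set \<Rightarrow> 'v set \<Rightarrow> nat \<Rightarrow> (nat \<Rightarrow> 'v \<Rightarrow> real) \<Rightarrow> (nat \<Rightarrow> real) \<Rightarrow> (nat \<Rightarrow> real)
    \<Rightarrow> ('v \<Rightarrow> 'v \<Rightarrow> real) \<Rightarrow> real \<Rightarrow> 'v set \<Rightarrow> bool" where
  "feasible V S p M k l dst d0 A \<longleftrightarrow>
     A \<subseteq> V - S \<and> A \<noteq> {} \<and>
     (\<forall>j\<in>{1..p}. k j \<le> vol (M j) A \<and> vol (M j) A \<le> l j) \<and>
     (\<forall>u\<in>A. \<forall>v\<in>A. dst u v \<le> d0)"

definition pen ::
  "nat \<Rightarrow> (nat \<Rightarrow> 'v \<Rightarrow> real) \<Rightarrow> (nat \<Rightarrow> real) \<Rightarrow> (nat \<Rightarrow> real)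
    \<Rightarrow> ('v \<Rightarrow> 'v \<Rightarrow> real) \<Rightarrow> real \<Rightarrow> 'v set \<Rightarrow> real" where
  "pen p M k l dst d0 A =
     (if A = {} then 0 else
        (\<Sum>j\<in>{1..p}. max 0 (vol (M j) A - l j))
      + (\<Sum>j\<in>{1..p}. max 0 (k j - vol (M j) A))
      + (\<Sum>u\<in>A. \<Sum>v\<in>A. max 0 (dst u v - d0)))"

definition gdsp_obj ::
  "('v \<Rightarrow> 'v \<Rightarrow> real) \<Rightarrow> 'v set \<Rightarrow> 'v set \<Rightarrow> ('v \<Rightarrow> real) \<Rightarrow> 'v set \<Rightarrow> real" where
  "gdsp_obj w V S g A = assocS w V S A / (vol g A + vol g S)"

definition Ufun ::
  "('v \<Rightarrow> 'v \<Rightarrow> real) \<Rightarrow> 'v set \<Rightarrow> 'v set \<Rightarrow> ('v \<Rightarrow> real) \<Rightarrow> real \<Rightarrow>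
    nat \<Rightarrow> (nat \<Rightarrow> 'v \<Rightarrow> real) \<Rightarrow> (nat \<Rightarrow> real) \<Rightarrow> (nat \<Rightarrow> real)
    \<Rightarrow> ('v \<Rightarrow> 'v \<Rightarrow> real) \<Rightarrow> real \<Rightarrow> 'v set \<Rightarrow> ereal" where
  "Ufun w V S g \<gamma> p M k l dst d0 A =
     (let num = vol g A + vol g S * unit_set A + \<gamma> * pen p M k l dst d0 A;
          den = assocS w V S A
      in if den = 0 \<and> num > 0 then PInfty else ereal (num / den))"

end

theory Submission
  imports Defs
begin

text \<open>On a feasible set the penalty vanishes, so U is the reciprocal of the (GDSP) objective,
  with the convention 1/0 = \<infinity>; minimising U over feasible sets is therefore maximising the
  objective. On an infeasible set B the penalty is at least \<theta>, and since
  assoc_S(B) = assoc(B \<union> S) \<le> vol_d(V), the choice of \<gamma> gives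
  U(B) \<ge> \<gamma> \<theta> / vol_d(V) > U(A_0). So every minimiser of U is feasible.\<close>

lemma inverse_ereal_le_iff:
  assumes "0 \<le> x" "0 \<le> y"
  shows "inverse (ereal x) \<le> inverse (ereal y) \<longleftrightarrow> y \<le> x"
  using assms ereal_inverse_antimono[of "ereal y" "ereal x"]
    ereal_inverse_antimono_strict[of "ereal x" "ereal y"]
  by (auto simp: not_le[symmetric])

lemma exact_penalty_principle:
  fixes U :: "'a \<Rightarrow> ereal" and f :: "'a \<Rightarrow> real"
  assumes "finite X" and "F \<subseteq> X" and "A0 \<in> F" and "0 < f A0"
    and f_nonneg: "\<And>A. A \<in> F \<Longrightarrow> 0 \<le> f A"
    and U_on_F: "\<And>A. A \<in> F \<Longrightarrow> U A = inverse (ereal (f A))"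
    and U_off_F: "\<And>B. B \<in> X - F \<Longrightarrow> U A0 < U B"
  shows "\<forall>A\<in>X. (\<forall>B\<in>X. U A \<le> U B) \<longrightarrow> A \<in> F \<and> (\<forall>B\<in>F. f B \<le> f A)"
    and "\<forall>A\<in>F. (\<forall>B\<in>F. f B \<le> f A) \<longrightarrow> (\<forall>B\<in>X. U A \<le> U B)"
    and "Min (U ` X) = ereal (1 / Max (f ` F))"
proof -
  have U_le_iff: "U A \<le> U B \<longleftrightarrow> f B \<le> f A" if "A \<in> F" "B \<in> F" for A B
    unfolding U_on_F[OF that(1)] U_on_F[OF that(2)]
    using that by (intro inverse_ereal_le_iff f_nonneg)
  show min_is_max: "\<forall>A\<in>X. (\<forall>B\<in>X. U A \<le> U B) \<longrightarrow> A \<in> F \<and> (\<forall>B\<in>F. f B \<le> f A)"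
  proof (intro ballI impI)
    fix A assume "A \<in> X" and min: "\<forall>B\<in>X. U A \<le> U B"
    moreover have "U A \<le> U A0"
      using min \<open>A0 \<in> F\<close> \<open>F \<subseteq> X\<close> by blast
    ultimately have "A \<in> F"
      using U_off_F \<open>A \<in> X\<close> by (meson DiffI leD)
    then show "A \<in> F \<and> (\<forall>B\<in>F. f B \<le> f A)"
      using min \<open>F \<subseteq> X\<close> U_le_iff by blast
  qed
  show max_is_min: "\<forall>A\<in>F. (\<forall>B\<in>F. f B \<le> f A) \<longrightarrow> (\<forall>B\<in>X. U A \<le> U B)"
  proof (intro ballI impI)
    fix A B assume "A \<in> F" and max: "\<forall>B\<in>F. f B \<le> f A" and "B \<in> X"
    show "U A \<le> U B"
    proof (cases "B \<in> F")
      case False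
      have "U A \<le> U A0"
        using U_le_iff \<open>A \<in> F\<close> \<open>A0 \<in> F\<close> max by blast
      also have "\<dots> < U B"
        using U_off_F \<open>B \<in> X\<close> False by blast
      finally show ?thesis by simp
    qed (use U_le_iff \<open>A \<in> F\<close> max in blast)
  qed
  have "finite F"
    using \<open>finite X\<close> \<open>F \<subseteq> X\<close> finite_subset by blast
  then have "Max (f ` F) \<in> f ` F"
    using \<open>A0 \<in> F\<close> by (intro Max_in) auto
  then obtain A where "A \<in> F" and A_max: "f A = Max (f ` F)"
    by (metis imageE)
  then have "\<forall>B\<in>F. f B \<le> f A"
    using \<open>finite F\<close> by simp
  then have "Min (U ` X) = U A"
    using max_is_min \<open>A \<in> F\<close> \<open>F \<subseteq> X\<close> \<open>finite X\<close> by (intro Min_eqI) blast+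
  moreover have "0 < f A"
    using \<open>\<forall>B\<in>F. f B \<le> f A\<close> \<open>A0 \<in> F\<close> \<open>0 < f A0\<close> by (meson less_le_trans)
  ultimately show "Min (U ` X) = ereal (1 / Max (f ` F))"
    using U_on_F[OF \<open>A \<in> F\<close>] A_max by (simp add: inverse_eq_divide)
qed

lemma vol_deg_eq_cut: "vol (deg w B) A = cut w A B"
  by (simp add: vol_def deg_def cut_def)

lemma assoc_eq_cut: "assoc w A = cut w A A"
  by (simp add: assoc_def cut_def)

lemma cut_Un_right:
  assumes "finite B" "finite C" "B \<inter> C = {}"
  shows "cut w A (B \<union> C) = cut w A B + cut w A C"
  unfolding cut_def using assms by (simp add: sum.union_disjoint sum.distrib)

lemma cut_Un_left:
  assumes "finite A" "finite B" "A \<inter> B = {}"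
  shows "cut w (A \<union> B) C = cut w A C + cut w B C"
  unfolding cut_def using assms by (simp add: sum.union_disjoint)

lemma cut_commute:
  assumes "\<forall>i\<in>A. \<forall>j\<in>B. w i j = w j i"
  shows "cut w B A = cut w A B"
proof -
  have "cut w B A = (\<Sum>j\<in>A. \<Sum>i\<in>B. w i j)"
    unfolding cut_def by (rule sum.swap)
  also have "\<dots> = cut w A B"
    unfolding cut_def using assms by (intro sum.cong refl) auto
  finally show ?thesis .
qed

lemma assoc_Un:
  assumes "finite A" "finite B" "A \<inter> B = {}" and "\<forall>i\<in>A. \<forall>j\<in>B. w i j = w j i"
  shows "assoc w (A \<union> B) = assoc w A + 2 * cut w A B + assoc w B"
  using assms cut_commute[OF assms(4)]
  by (simp add: assoc_eq_cut cut_Un_left cut_Un_right Int_commute)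

lemma assoc_nonneg:
  assumes "\<forall>i\<in>A. \<forall>j\<in>A. 0 \<le> w i j"
  shows "0 \<le> assoc w A"
  unfolding assoc_def using assms by (intro sum_nonneg) auto

lemma assoc_mono:
  assumes "finite B" "A \<subseteq> B" and "\<forall>i\<in>B. \<forall>j\<in>B. 0 \<le> w i j"
  shows "assoc w A \<le> assoc w B"
proof -
  have "assoc w A \<le> (\<Sum>i\<in>A. \<Sum>j\<in>B. w i j)"
    unfolding assoc_def using assms finite_subset
    by (intro sum_mono sum_mono2) (auto simp: subset_iff)
  also have "\<dots> \<le> assoc w B"
    unfolding assoc_def using assms by (intro sum_mono2 sum_nonneg) auto
  finally show ?thesis .
qed

lemma assocS_eq_assoc_Un:
  assumes "finite V" "S \<subseteq> V" "A \<subseteq> V - S" "A \<noteq> {}"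
    and w_sym: "\<forall>i\<in>V. \<forall>j\<in>V. w i j = w j i"
  shows "assocS w V S A = assoc w (A \<union> S)"
proof -
  define R where "R = V - S - A"
  have fin: "finite A" "finite S" "finite R"
    unfolding R_def using assms(1-3) finite_subset by blast+
  have "V = (A \<union> R) \<union> S"
    unfolding R_def using assms(2,3) by blast
  then have "cut w A V = cut w A ((A \<union> R) \<union> S)"
    by (rule arg_cong)
  also have "\<dots> = cut w A (A \<union> R) + cut w A S"
    using fin assms(3) by (intro cut_Un_right) (auto simp: R_def)
  also have "cut w A (A \<union> R) = cut w A A + cut w A R"
    using fin by (intro cut_Un_right) (auto simp: R_def)
  finally have "cut w A V = assoc w A + cut w A R + cut w A S"
    by (simp add: assoc_eq_cut)
  moreover have "assocS w V S A = cut w A V - cut w A R + cut w A S + assoc w S"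
    unfolding assocS_def vol_deg_eq_cut R_def unit_set_def using assms(4) by simp
  moreover have "assoc w (A \<union> S) = assoc w A + 2 * cut w A S + assoc w S"
    using fin assms(2,3) w_sym by (intro assoc_Un) auto
  ultimately show ?thesis
    by linarith
qed

lemma assocS_nonneg_le_vol:
  assumes "finite V" "S \<subseteq> V" "A \<subseteq> V - S" "A \<noteq> {}"
    and w_sym: "\<forall>i\<in>V. \<forall>j\<in>V. w i j = w j i"
    and w_nonneg: "\<forall>i\<in>V. \<forall>j\<in>V. 0 \<le> w i j"
  shows "0 \<le> assocS w V S A" and "assocS w V S A \<le> vol (deg w V) V"
proof -
  have "A \<union> S \<subseteq> V"
    using assms(2,3) by blast
  then show "0 \<le> assocS w V S A" and "assocS w V S A \<le> vol (deg w V) V"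
    using assocS_eq_assoc_Un[OF assms(1-5)] assoc_mono[OF assms(1) _ w_nonneg]
      assoc_nonneg[of "A \<union> S" w] w_nonneg
    by (auto simp: vol_deg_eq_cut assoc_eq_cut[symmetric] subset_iff)
qed

lemma vol_pos:
  assumes "finite A" "A \<noteq> {}" "\<forall>i\<in>A. 0 < h i"
  shows "0 < vol h A"
  unfolding vol_def using assms by (intro sum_pos) auto

lemma vol_nonneg:
  assumes "\<forall>i\<in>A. 0 \<le> h i"
  shows "0 \<le> vol h A"
  unfolding vol_def using assms by (intro sum_nonneg) auto

lemma vol_add_vol_pos:
  assumes "finite V" "A \<subseteq> V" "A \<noteq> {}" "S \<subseteq> V" and "\<forall>i\<in>V. 0 < g i"
  shows "0 < vol g A + vol g S"
proof -
  have "finite A"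
    using assms(1,2) by (rule finite_subset[rotated])
  then have "0 < vol g A"
    using assms(2,3,5) by (intro vol_pos) auto
  moreover have "0 \<le> vol g S"
    using assms by (intro vol_nonneg) (auto simp: less_imp_le)
  ultimately show ?thesis
    by linarith
qed

lemma pen_nonneg: "0 \<le> pen p M k l dst d0 A"
  unfolding pen_def by (auto intro!: sum_nonneg add_nonneg_nonneg)

lemma pen_eq_0_if_feasible:
  assumes "feasible V S p M k l dst d0 A"
  shows "pen p M k l dst d0 A = 0"
  using assms unfolding feasible_def pen_def by auto

lemma pen_pos_if_infeasible:
  assumes "finite A" "A \<subseteq> V - S" "A \<noteq> {}" and "\<not> feasible V S p M k l dst d0 A"
  shows "0 < pen p M k l dst d0 A"
proof -
  let ?upper = "\<Sum>j\<in>{1..p}. max 0 (vol (M j) A - l j)"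
  let ?lower = "\<Sum>j\<in>{1..p}. max 0 (k j - vol (M j) A)"
  let ?diam = "\<Sum>u\<in>A. \<Sum>v\<in>A. max 0 (dst u v - d0)"
  have nonneg: "0 \<le> ?upper" "0 \<le> ?lower" "0 \<le> ?diam"
    by (auto intro!: sum_nonneg)
  have pen_eq: "pen p M k l dst d0 A = ?upper + ?lower + ?diam"
    using assms(3) by (simp add: pen_def)
  from assms(2-4) consider (lower) j where "j \<in> {1..p}" "vol (M j) A < k j"
    | (upper) j where "j \<in> {1..p}" "l j < vol (M j) A"
    | (diam) u v where "u \<in> A" "v \<in> A" "d0 < dst u v"
    unfolding feasible_def by (auto simp: not_le simp del: atLeastAtMost_iff)
  then show ?thesis
  proof cases
    case (lower j)
    then have "max 0 (k j - vol (M j) A) \<le> ?lower"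
      by (intro member_le_sum) auto
    then show ?thesis using lower pen_eq nonneg by linarith
  next
    case (upper j)
    then have "max 0 (vol (M j) A - l j) \<le> ?upper"
      by (intro member_le_sum) auto
    then show ?thesis using upper pen_eq nonneg by linarith
  next
    case (diam u v)
    then have "max 0 (dst u v - d0) \<le> (\<Sum>v\<in>A. max 0 (dst u v - d0))"
      using assms(1) by (intro member_le_sum) auto
    also have "\<dots> \<le> ?diam"
      using diam assms(1)
      by (intro member_le_sum[where f = "\<lambda>u. \<Sum>v\<in>A. max 0 (dst u v - d0)"]) (auto intro!: sum_nonneg)
    finally show ?thesis using diam pen_eq nonneg by linarith
  qed
qed

lemma Ufun_eq:
  assumes "A \<noteq> {}" and num_pos: "0 < vol g A + vol g S + \<gamma> * pen p M k l dst d0 A"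
  shows "Ufun w V S g \<gamma> p M k l dst d0 A =
    (if assocS w V S A = 0 then \<infinity>
     else ereal ((vol g A + vol g S + \<gamma> * pen p M k l dst d0 A) / assocS w V S A))"
  using assms by (simp add: Ufun_def Let_def unit_set_def)

lemma vol_add_vol_pos_if_feasible:
  assumes "finite V" "S \<subseteq> V" "\<forall>i\<in>V. 0 < g i" and "feasible V S p M k l dst d0 A"
  shows "0 < vol g A + vol g S"
  using assms(4) by (intro vol_add_vol_pos[OF assms(1) _ _ assms(2,3)]) (auto simp: feasible_def)

lemma gdsp_obj_nonneg:
  assumes "finite V" "S \<subseteq> V"
    and w_sym: "\<forall>i\<in>V. \<forall>j\<in>V. w i j = w j i"
    and w_nonneg: "\<forall>i\<in>V. \<forall>j\<in>V. 0 \<le> w i j"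
    and g_pos: "\<forall>i\<in>V. 0 < g i"
    and "feasible V S p M k l dst d0 A"
  shows "0 \<le> gdsp_obj w V S g A"
proof -
  have "0 \<le> assocS w V S A"
    using assms(6) by (intro assocS_nonneg_le_vol(1)[OF assms(1,2) _ _ w_sym w_nonneg])
      (auto simp: feasible_def)
  then show ?thesis
    using vol_add_vol_pos_if_feasible[OF assms(1,2) g_pos assms(6)] by (simp add: gdsp_obj_def)
qed

lemma Ufun_feasible:
  assumes "finite V" "S \<subseteq> V" "\<forall>i\<in>V. 0 < g i" and "feasible V S p M k l dst d0 A"
  shows "Ufun w V S g \<gamma> p M k l dst d0 A = inverse (ereal (gdsp_obj w V S g A))"
proof -
  have "A \<noteq> {}"
    using assms(4) by (simp add: feasible_def)
  then show ?thesis
    using Ufun_eq[of A g S \<gamma> p M k l dst d0 w V] vol_add_vol_pos_if_feasible[OF assms]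
    by (simp add: pen_eq_0_if_feasible[OF assms(4)] gdsp_obj_def)
qed

lemma Ufun_gt_if_penalty_gt:
  assumes "finite V" "S \<subseteq> V" "A \<subseteq> V - S" "A \<noteq> {}"
    and w_sym: "\<forall>i\<in>V. \<forall>j\<in>V. w i j = w j i"
    and w_nonneg: "\<forall>i\<in>V. \<forall>j\<in>V. 0 \<le> w i j"
    and vol_g_pos: "0 < vol g A + vol g S" and "0 \<le> \<gamma>"
    and c_lt: "c < \<gamma> * pen p M k l dst d0 A / vol (deg w V) V"
  shows "ereal c < Ufun w V S g \<gamma> p M k l dst d0 A"
proof -
  let ?a = "assocS w V S A" and ?P = "\<gamma> * pen p M k l dst d0 A"
  have "0 \<le> ?P"
    using \<open>0 \<le> \<gamma>\<close> pen_nonneg by (rule mult_nonneg_nonneg)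
  have U_eq: "Ufun w V S g \<gamma> p M k l dst d0 A =
      (if ?a = 0 then \<infinity> else ereal ((vol g A + vol g S + ?P) / ?a))"
    using \<open>0 \<le> ?P\<close> vol_g_pos by (intro Ufun_eq \<open>A \<noteq> {}\<close>) linarith
  have "0 \<le> ?a" "?a \<le> vol (deg w V) V"
    using assocS_nonneg_le_vol[OF assms(1-6)] by auto
  show ?thesis
  proof (cases "?a = 0")
    case False
    then have "0 < ?a" using \<open>0 \<le> ?a\<close> by linarith
    have "c < ?P / vol (deg w V) V" by (fact c_lt)
    also have "\<dots> \<le> ?P / ?a"
      using \<open>0 < ?a\<close> \<open>?a \<le> vol (deg w V) V\<close> \<open>0 \<le> ?P\<close> by (intro divide_left_mono) auto
    also have "\<dots> \<le> (vol g A + vol g S + ?P) / ?a"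
      using \<open>0 < ?a\<close> vol_g_pos by (intro divide_right_mono) auto
    finally show ?thesis using U_eq False by simp
  qed (use U_eq in simp)
qed

lemma penalty_threshold:
  fixes P :: "'a \<Rightarrow> real"
  assumes "finite I" "B \<in> I" "\<forall>A\<in>I. 0 < P A" "0 < D" "0 < r"
    and \<gamma>_gt: "D / Min (P ` I) * r < \<gamma>"
  shows "0 \<le> \<gamma>" and "r < \<gamma> * P B / D"
proof -
  define \<theta> where "\<theta> = Min (P ` I)"
  have "\<theta> \<in> P ` I" "\<theta> \<le> P B"
    unfolding \<theta>_def using assms(1,2) by (auto intro: Min_in)
  then have "0 < \<theta>"
    using assms(3) by auto
  then show "0 \<le> \<gamma>"
    using \<gamma>_gt \<open>0 < D\<close> \<open>0 < r\<close> unfolding \<theta>_def[symmetric]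
    by (smt (verit) divide_pos_pos mult_pos_pos)
  have "r = D / \<theta> * r * \<theta> / D"
    using \<open>0 < \<theta>\<close> \<open>0 < D\<close> by simp
  also have "\<dots> < \<gamma> * \<theta> / D"
    using \<gamma>_gt \<open>0 < \<theta>\<close> \<open>0 < D\<close> unfolding \<theta>_def[symmetric]
    by (intro divide_strict_right_mono mult_strict_right_mono)
  also have "\<dots> \<le> \<gamma> * P B / D"
    using \<open>\<theta> \<le> P B\<close> \<open>0 \<le> \<gamma>\<close> \<open>0 < D\<close> by (intro divide_right_mono mult_left_mono) auto
  finally show "r < \<gamma> * P B / D" .
qed

lemma Ufun_feasible_lt_infeasible:
  assumes "finite V" "S \<subseteq> V"
    and w_sym: "\<forall>i\<in>V. \<forall>j\<in>V. w i j = w j i"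
    and w_nonneg: "\<forall>i\<in>V. \<forall>j\<in>V. 0 \<le> w i j"
    and g_pos: "\<forall>i\<in>V. 0 < g i"
    and A0_feas: "feasible V S p M k l dst d0 A0"
    and A0_pos: "assocS w V S A0 > 0"
    and gamma: "{A. A \<subseteq> V - S \<and> A \<noteq> {} \<and> \<not> feasible V S p M k l dst d0 A} \<noteq> {} \<Longrightarrow>
       \<gamma> > vol (deg w V) V
             / Min (pen p M k l dst d0 ` {A. A \<subseteq> V - S \<and> A \<noteq> {} \<and> \<not> feasible V S p M k l dst d0 A})
             * ((vol g A0 + vol g S) / assocS w V S A0)"
    and B: "B \<subseteq> V - S" "B \<noteq> {}" "\<not> feasible V S p M k l dst d0 B"
  shows "Ufun w V S g \<gamma> p M k l dst d0 A0 < Ufun w V S g \<gamma> p M k l dst d0 B"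
proof -
  let ?I = "{A. A \<subseteq> V - S \<and> A \<noteq> {} \<and> \<not> feasible V S p M k l dst d0 A}"
  let ?r = "(vol g A0 + vol g S) / assocS w V S A0"
  have I_fin: "finite ?I"
    by (rule finite_subset[of _ "Pow V"]) (use \<open>finite V\<close> in auto)
  have B_in_I: "B \<in> ?I"
    using B by blast
  have pen_pos: "\<forall>A\<in>?I. 0 < pen p M k l dst d0 A"
  proof
    fix A assume "A \<in> ?I"
    moreover have "finite A"
      using \<open>A \<in> ?I\<close> \<open>finite V\<close> finite_subset by blast
    ultimately show "0 < pen p M k l dst d0 A"
      by (intro pen_pos_if_infeasible[where V = V and S = S]) auto
  qed
  have A0: "A0 \<subseteq> V - S" "A0 \<noteq> {}"
    using A0_feas by (auto simp: feasible_def)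
  have D_pos: "0 < vol (deg w V) V"
    using A0_pos assocS_nonneg_le_vol(2)[OF assms(1,2) A0 w_sym w_nonneg] by linarith
  have "0 < vol g A0 + vol g S"
    by (rule vol_add_vol_pos_if_feasible[OF assms(1,2) g_pos A0_feas])
  then have r_pos: "0 < ?r" and U_A0: "Ufun w V S g \<gamma> p M k l dst d0 A0 = ereal ?r"
    using A0_pos Ufun_feasible[OF assms(1,2) g_pos A0_feas] by (simp_all add: gdsp_obj_def)
  have "?I \<noteq> {}"
    using B_in_I by blast
  note threshold = penalty_threshold[OF I_fin B_in_I pen_pos D_pos r_pos gamma[OF this]]
  have "0 < vol g B + vol g S"
    using B by (intro vol_add_vol_pos[OF \<open>finite V\<close> _ _ \<open>S \<subseteq> V\<close> g_pos]) auto
  then show ?thesis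
    unfolding U_A0 using threshold B_in_I
    by (intro Ufun_gt_if_penalty_gt[OF assms(1,2) B(1,2) w_sym w_nonneg]) blast+
qed

theorem theorem1:
  fixes V S :: "'v set" and w :: "'v \<Rightarrow> 'v \<Rightarrow> real" and g :: "'v \<Rightarrow> real"
    and p :: nat and M :: "nat \<Rightarrow> 'v \<Rightarrow> real" and k l :: "nat \<Rightarrow> real"
    and dst :: "'v \<Rightarrow> 'v \<Rightarrow> real" and d0 \<gamma> :: real and A0 :: "'v set"
  assumes finV: "finite V" and SV: "S \<subseteq> V"
    and w_sym: "\<forall>i\<in>V. \<forall>j\<in>V. w i j = w j i"
    and w_nonneg: "\<forall>i\<in>V. \<forall>j\<in>V. 0 \<le> w i j"
    and w_diag: "\<forall>i\<in>V. w i i = 0"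
    and g_pos: "\<forall>i\<in>V. 0 < g i"
    and M_nonneg: "\<forall>j\<in>{1..p}. \<forall>i\<in>V. 0 \<le> M j i"
    and dist_sym: "\<forall>u\<in>V. \<forall>v\<in>V. dst u v = dst v u"
    and dist_nonneg: "\<forall>u\<in>V. \<forall>v\<in>V. 0 \<le> dst u v"
    and dist_refl: "\<forall>u\<in>V. dst u u = 0"
    and d0_nonneg: "0 \<le> d0"
    and A0_feas: "feasible V S p M k l dst d0 A0"
    and A0_pos: "assocS w V S A0 > 0"
    and gamma: "{A. A \<subseteq> V - S \<and> A \<noteq> {} \<and> \<not> feasible V S p M k l dst d0 A} \<noteq> {} \<Longrightarrow>
       \<gamma> > vol (deg w V) V
             / Min (pen p M k l dst d0 ` {A. A \<subseteq> V - S \<and> A \<noteq> {} \<and> \<not> feasible V S p M k l dst d0 A})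
             * ((vol g A0 + vol g S) / assocS w V S A0)"
  shows "(\<forall>A. (A \<subseteq> V - S \<and> A \<noteq> {} \<and>
               (\<forall>B. B \<subseteq> V - S \<and> B \<noteq> {} \<longrightarrow>
                  Ufun w V S g \<gamma> p M k l dst d0 A \<le> Ufun w V S g \<gamma> p M k l dst d0 B))
            \<longrightarrow> feasible V S p M k l dst d0 A \<and>
                (\<forall>B. feasible V S p M k l dst d0 B \<longrightarrow> gdsp_obj w V S g B \<le> gdsp_obj w V S g A))
       \<and> (\<forall>A. (feasible V S p M k l dst d0 A \<and>
               (\<forall>B. feasible V S p M k l dst d0 B \<longrightarrow> gdsp_obj w V S g B \<le> gdsp_obj w V S g A))
            \<longrightarrow> (\<forall>B. B \<subseteq> V - S \<and> B \<noteq> {} \<longrightarrow>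
                  Ufun w V S g \<gamma> p M k l dst d0 A \<le> Ufun w V S g \<gamma> p M k l dst d0 B))
       \<and> Min (Ufun w V S g \<gamma> p M k l dst d0 ` {A. A \<subseteq> V - S \<and> A \<noteq> {}})
           = ereal (1 / Max (gdsp_obj w V S g ` {A. feasible V S p M k l dst d0 A}))"
proof -
  let ?X = "{A. A \<subseteq> V - S \<and> A \<noteq> {}}" and ?F = "{A. feasible V S p M k l dst d0 A}"
  let ?U = "Ufun w V S g \<gamma> p M k l dst d0" and ?f = "gdsp_obj w V S g"
  have X_fin: "finite ?X"
    by (rule finite_subset[of _ "Pow V"]) (use finV in auto)
  have F_sub_X: "?F \<subseteq> ?X"
    by (auto simp: feasible_def)
  have A0_in_F: "A0 \<in> ?F"
    using A0_feas by simp
  have f_A0_pos: "0 < ?f A0"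
    using A0_pos vol_add_vol_pos_if_feasible[OF finV SV g_pos A0_feas] by (simp add: gdsp_obj_def)
  have f_nonneg: "0 \<le> ?f A" if "A \<in> ?F" for A
    using that gdsp_obj_nonneg[OF finV SV w_sym w_nonneg g_pos] by simp
  have U_on_F: "?U A = inverse (ereal (?f A))" if "A \<in> ?F" for A
    using that Ufun_feasible[OF finV SV g_pos] by simp
  have U_off_F: "?U A0 < ?U B" if "B \<in> ?X - ?F" for B
    using that Ufun_feasible_lt_infeasible[OF finV SV w_sym w_nonneg g_pos A0_feas A0_pos gamma]
    by simp
  have "\<forall>A\<in>?X. (\<forall>B\<in>?X. ?U A \<le> ?U B) \<longrightarrow> A \<in> ?F \<and> (\<forall>B\<in>?F. ?f B \<le> ?f A)"
    and "\<forall>A\<in>?F. (\<forall>B\<in>?F. ?f B \<le> ?f A) \<longrightarrow> (\<forall>B\<in>?X. ?U A \<le> ?U B)"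
    and "Min (?U ` ?X) = ereal (1 / Max (?f ` ?F))"
    by (rule exact_penalty_principle[of ?X ?F A0 ?f ?U];
        fact X_fin F_sub_X A0_in_F f_A0_pos f_nonneg U_on_F U_off_F)+
  then show ?thesis
    unfolding Ball_def mem_Collect_eq by (intro conjI) blast+
qed

end
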